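(* If $u=v_1\,0\,v_2\,0\cdots0\,v_r$, where $v_1,\dots,v_r$ are arbitrary (possibly empty) words over $\{1,0,\bar1\}$, then \[ [u]=[v_10]\,[0v_20]\cdots[0v_{r-1}0]\,[0v_r]. \]
   Context: Words are finite sequences over the alphabet $\{1,0,\bar1\}$ (where $\bar1=-1$). Let $a,b,c,d,e$ be indeterminates. For every word $u$ a Laurent polynomial $[u]$ in $a,b,c,d,e$ is defined by the recursions, valid for all (possibly empty) words $v,w$: $[v01w]=[v0w]/a$, $[v\bar11w]=([v\bar1w]+[v1w])/b$, $[v\bar10w]=[v0w]/c$, $[v\bar1]=[v]/d$, $[1v]=[v]/e$, together with $[u]=1$ whenever $u$ consists only of $0$'s (including the empty word). These rules determine $[u]$ uniquely for every word. *)

theory Defs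
  imports Main
begin

text \<open>Letters of the alphabet: P = 1, Z = 0, N = bar 1 = -1.\<close>
datatype letter = P | Z | N

type_synonym word = "letter list"

text \<open>The defining recursions for the bracket, with the indeterminates
  a,b,c,d,e interpreted as (nonzero) elements of an arbitrary field.\<close>
definition bracket_rules ::
  "'k::field \<Rightarrow> 'k \<Rightarrow> 'k \<Rightarrow> 'k \<Rightarrow> 'k \<Rightarrow> (word \<Rightarrow> 'k) \<Rightarrow> bool" where
  "bracket_rules a b c d e f \<longleftrightarrow>
     (\<forall>v w. f (v @ [Z, P] @ w) = f (v @ [Z] @ w) / a) \<and>
     (\<forall>v w. f (v @ [N, P] @ w) = (f (v @ [N] @ w) + f (v @ [P] @ w)) / b) \<and>
     (\<forall>v w. f (v @ [N, Z] @ w) = f (v @ [Z] @ w) / c) \<and>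
     (\<forall>v. f (v @ [N]) = f v / d) \<and>
     (\<forall>v. f (P # v) = f v / e) \<and>
     (\<forall>u. set u \<subseteq> {Z} \<longrightarrow> f u = 1)"

definition bracket :: "'k::field \<Rightarrow> 'k \<Rightarrow> 'k \<Rightarrow> 'k \<Rightarrow> 'k \<Rightarrow> word \<Rightarrow> 'k" where
  "bracket a b c d e = (THE f. bracket_rules a b c d e f)"

fun join0 :: "word list \<Rightarrow> word" where
  "join0 [] = []"
| "join0 [v] = v"
| "join0 (v # vs) = v @ [Z] @ join0 vs"

end

theory Submission
  imports Defs
begin

text \<open>Reading a word from left to right, the rules can be evaluated by a machine whose only
  state is the number of pending letters \<open>\<bar>1\<close> and whether a letter \<open>0\<close> has been read yet.
  Every \<open>0\<close> discharges the pending \<open>\<bar>1\<close>'s (one factor \<open>1/c\<close> each) and resets the state,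
  so the value of \<open>v 0 w\<close> is the value of \<open>v 0\<close> times that of \<open>0 w\<close>. Since the rules
  determine the bracket uniquely (induction on the length), the bracket is this machine.\<close>

context fixes a b c d e :: "'k::field"
begin

text \<open>\<open>bracket_eval True j w\<close> computes \<open>[\<bar>1\<^sup>j w]\<close> and \<open>bracket_eval False j w\<close> computes
  \<open>[0 \<bar>1\<^sup>j w]\<close>; the last equation is the closed form of unfolding the \<open>\<bar>1 1\<close> rule \<open>j\<close> times.\<close>
fun bracket_eval :: "bool \<Rightarrow> nat \<Rightarrow> word \<Rightarrow> 'k" where
  "bracket_eval t j [] = inverse d ^ j"
| "bracket_eval t j (Z # w) = inverse c ^ j * bracket_eval False 0 w"
| "bracket_eval t j (N # w) = bracket_eval t (Suc j) w"
| "bracket_eval t 0 (P # w) = inverse (if t then e else a) * bracket_eval t 0 w"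
| "bracket_eval t (Suc m) (P # w) =
     (\<Sum>k\<le>m. bracket_eval t (Suc m - k) w * inverse b ^ Suc k)
     + bracket_eval t 0 w * inverse (if t then e else a) * inverse b ^ Suc m"

lemma bracket_eval_append_linear:
  assumes "\<And>t j. bracket_eval t j X = k1 * bracket_eval t j Y + k2 * bracket_eval t j W"
  shows "bracket_eval t j (v @ X) = k1 * bracket_eval t j (v @ Y) + k2 * bracket_eval t j (v @ W)"
proof (induction v arbitrary: t j)
  case Nil
  then show ?case using assms by simp
next
  case (Cons l v)
  show ?case
  proof (cases l)
    case P
    then show ?thesis
    proof (cases j)
      case 0
      then show ?thesis using P Cons by (simp add: algebra_simps)
    next
      case (Suc m)
      then show ?thesis using P Cons by (simp add: sum.distrib sum_distrib_left algebra_simps)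
    qed
  qed (use Cons in \<open>simp_all add: algebra_simps\<close>)
qed

lemma bracket_eval_append_scale:
  assumes "\<And>t j. bracket_eval t j X = k * bracket_eval t j Y"
  shows "bracket_eval t j (v @ X) = k * bracket_eval t j (v @ Y)"
  using bracket_eval_append_linear[of X k Y 0 Y] assms by simp

lemma bracket_eval_zeros: "set u \<subseteq> {Z} \<Longrightarrow> bracket_eval t 0 u = 1"
  by (induction u arbitrary: t) auto

lemma bracket_eval_NP:
  "bracket_eval t j (N # P # w) = inverse b * bracket_eval t j (N # w) + inverse b * bracket_eval t j (P # w)"
proof (cases j)
  case 0
  then show ?thesis by (simp add: algebra_simps)
next
  case (Suc m)
  have "(\<Sum>k\<le>Suc m. bracket_eval t (Suc (Suc m) - k) w * inverse b ^ Suc k)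
     = bracket_eval t (Suc (Suc m)) w * inverse b
       + (\<Sum>k\<le>m. bracket_eval t (Suc m - k) w * inverse b ^ Suc (Suc k))"
    by (subst sum.atMost_Suc_shift) simp
  then show ?thesis using Suc by (simp add: sum_distrib_left algebra_simps)
qed

lemma bracket_eval_split_at_Z:
  "bracket_eval t j (v @ Z # w) = bracket_eval False 0 w * bracket_eval t j (v @ [Z])"
  by (rule bracket_eval_append_scale) simp

lemma bracket_rules_bracket_eval: "bracket_rules a b c d e (bracket_eval True 0)"
  unfolding bracket_rules_def
proof (intro conjI allI impI)
  fix v w
  show "bracket_eval True 0 (v @ [Z, P] @ w) = bracket_eval True 0 (v @ [Z] @ w) / a"
    using bracket_eval_append_scale[of "Z # P # w" "inverse a" "Z # w"] by (simp add: field_simps)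
  show "bracket_eval True 0 (v @ [N, P] @ w) =
      (bracket_eval True 0 (v @ [N] @ w) + bracket_eval True 0 (v @ [P] @ w)) / b"
    using bracket_eval_append_linear[of "N # P # w" "inverse b" "N # w" "inverse b" "P # w",
        OF bracket_eval_NP]
    by (simp add: divide_inverse distrib_left mult.commute)
  show "bracket_eval True 0 (v @ [N, Z] @ w) = bracket_eval True 0 (v @ [Z] @ w) / c"
    using bracket_eval_append_scale[of "N # Z # w" "inverse c" "Z # w"] by (simp add: field_simps)
next
  fix v
  show "bracket_eval True 0 (v @ [N]) = bracket_eval True 0 v / d"
    using bracket_eval_append_scale[of "[N]" "inverse d" "[]"] by (simp add: field_simps)
  show "bracket_eval True 0 (P # v) = bracket_eval True 0 v / e"
    by (simp add: field_simps)
next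
  fix u :: word
  assume "set u \<subseteq> {Z}"
  then show "bracket_eval True 0 u = 1" by (rule bracket_eval_zeros)
qed

lemma bracket_eval_join0:
  "vs \<noteq> [] \<Longrightarrow> bracket_eval t 0 (join0 vs) =
    (\<Prod>i<length vs. bracket_eval (if i = 0 then t else False) 0
        (vs ! i @ (if i = length vs - 1 then [] else [Z])))"
proof (induction vs arbitrary: t rule: join0.induct)
  case (3 v v' vs)
  have "bracket_eval t 0 (join0 (v # v' # vs)) =
        bracket_eval False 0 (join0 (v' # vs)) * bracket_eval t 0 (v @ [Z])"
    using bracket_eval_split_at_Z[of t 0 v "join0 (v' # vs)"] by simp
  also have "bracket_eval False 0 (join0 (v' # vs)) =
    (\<Prod>i<length (v' # vs). bracket_eval False 0
        ((v' # vs) ! i @ (if i = length (v' # vs) - 1 then [] else [Z])))"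
    using 3 by simp
  finally show ?case
    by (simp only: length_Cons prod.lessThan_Suc_shift) (simp add: mult.commute)
qed simp_all

end

lemma word_zeros_or_rule_redex:
  "set u \<subseteq> {Z} \<or> (\<exists>v. u = P # v) \<or> (\<exists>v. u = v @ [N])
   \<or> (\<exists>v w. u = v @ [Z, P] @ w) \<or> (\<exists>v w. u = v @ [N, P] @ w) \<or> (\<exists>v w. u = v @ [N, Z] @ w)"
proof (induction u)
  case Nil
  then show ?case by simp
next
  case (Cons x u)
  from Cons.IH show ?case
  proof (elim disjE exE)
    assume zeros: "set u \<subseteq> {Z}"
    show ?thesis
    proof (cases x)
      case N
      show ?thesis
      proof (cases u)
        case Nil
        then show ?thesis using N by (metis append_Nil)
      next
        case (Cons y u')
        then have "y = Z" using zeros by auto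
        then show ?thesis using N Cons by (metis append_Cons append_Nil)
      qed
    qed (use zeros in auto)
  next
    fix v
    assume "u = P # v"
    then show ?thesis by (cases x) (metis append_Cons append_Nil)+
  qed (metis append_Cons)+
qed

lemma bracket_rules_unique:
  assumes "bracket_rules a b c d e f" "bracket_rules a b c d e g"
  shows "f u = g u"
proof (induction u rule: length_induct)
  case (1 u)
  note rules = assms[unfolded bracket_rules_def]
  from word_zeros_or_rule_redex[of u] show ?case
  proof (elim disjE exE)
    assume "set u \<subseteq> {Z}"
    then show ?thesis using rules by auto
  next
    fix v
    assume u: "u = P # v"
    then have "f v = g v" using 1 by auto
    then show ?thesis using rules u by auto
  next
    fix v
    assume u: "u = v @ [N]"
    then have "f v = g v" using 1 by auto
    then show ?thesis using rules u by auto
  next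
    fix v w
    assume u: "u = v @ [Z, P] @ w"
    then have "f (v @ [Z] @ w) = g (v @ [Z] @ w)" using 1 by auto
    then show ?thesis using rules u by auto
  next
    fix v w
    assume u: "u = v @ [N, P] @ w"
    then have "f (v @ [N] @ w) = g (v @ [N] @ w)" "f (v @ [P] @ w) = g (v @ [P] @ w)"
      using 1 by auto
    then show ?thesis using rules u by auto
  next
    fix v w
    assume u: "u = v @ [N, Z] @ w"
    then have "f (v @ [Z] @ w) = g (v @ [Z] @ w)" using 1 by auto
    then show ?thesis using rules u by auto
  qed
qed

lemma bracket_eq_bracket_eval: "bracket a b c d e = bracket_eval a b c d e True 0"
  unfolding bracket_def
proof (rule the_equality)
  show "bracket_rules a b c d e (bracket_eval a b c d e True 0)"
    by (rule bracket_rules_bracket_eval)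
  fix f
  assume "bracket_rules a b c d e f"
  then show "f = bracket_eval a b c d e True 0"
    by (intro ext bracket_rules_unique[OF _ bracket_rules_bracket_eval])
qed

theorem proposition4:
  fixes a b c d e :: "'k::field" and vs :: "word list"
  assumes "a \<noteq> 0" "b \<noteq> 0" "c \<noteq> 0" "d \<noteq> 0" "e \<noteq> 0"
    and "1 \<le> length vs"
  shows "bracket a b c d e (join0 vs) =
    (\<Prod>i<length vs. bracket a b c d e
        ((if i = 0 then [] else [Z]) @ vs ! i @ (if i = length vs - 1 then [] else [Z])))"
proof -
  have "vs \<noteq> []" using \<open>1 \<le> length vs\<close> by auto
  then show ?thesis
    unfolding bracket_eq_bracket_eval bracket_eval_join0[OF \<open>vs \<noteq> []\<close>]
    by (intro prod.cong) auto
qed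

end
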